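(* Let $\mathbf{A}\in\mathbb{C}^{n\times n}$, let $\mathbf{b}\in\mathbb{C}^n$ be nonzero, and let $k\geq 1$ be such that the Arnoldi algorithm applied to $(\mathbf{A},\mathbf{b})$ does not break down before step $k$, i.e. $\dim\mathcal{K}_{k+1}(\mathbf{A},\mathbf{b})=k+1$. Then \[ \min_{0\leq j\leq k}\|\mathbf{r}_j^{\mathrm{F}}\|_2 \;\leq\; \sqrt{k+1}\,\cdot\,\|\mathbf{r}_k^{\mathrm{G}}\|_2 . \]
   Context: The Krylov subspace is $\mathcal{K}_k(\mathbf{A},\mathbf{b})=\operatorname{span}\{\mathbf{b},\mathbf{A}\mathbf{b},\dots,\mathbf{A}^{k-1}\mathbf{b}\}$. The Arnoldi algorithm produces an orthonormal basis $\mathbf{Q}_k=[\mathbf{q}_1,\dots,\mathbf{q}_k]$ of $\mathcal{K}_k(\mathbf{A},\mathbf{b})$ with $\mathbf{q}_1=\mathbf{b}/\|\mathbf{b}\|_2$, and a $(k+1)\times k$ upper Hessenberg matrix $\mathbf{H}_{k+1,k}$ (entries $h_{i,j}$, with $h_{j+1,j}>0$) satisfying $\mathbf{A}\mathbf{Q}_k=\mathbf{Q}_{k+1}\mathbf{H}_{k+1,k}$; $\mathbf{H}_k$ denotes $\mathbf{H}_{k+1,k}$ with its last row deleted. With $\mathbf{e}_1=[1,0,\dots,0]^{\mathsf T}$, the FOM and GMRES iterates (zero initial guess, $\mathbf{x}_0^{\mathrm F}=\mathbf{x}_0^{\mathrm G}=\mathbf{0}$) are, for $j\ge1$, $\mathbf{x}_j^{\mathrm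 F}=\|\mathbf{b}\|_2\mathbf{Q}_j\mathbf{H}_j^{-1}\mathbf{e}_1$ and $\mathbf{x}_j^{\mathrm G}=\|\mathbf{b}\|_2\mathbf{Q}_j\mathbf{H}_{j+1,j}^{\dagger}\mathbf{e}_1$ ($\dagger$ = pseudoinverse); equivalently $\mathbf{x}_j^{\mathrm G}$ minimizes $\|\mathbf{b}-\mathbf{A}\mathbf{x}\|_2$ over $\mathbf{x}\in\mathcal{K}_j(\mathbf{A},\mathbf{b})$. Residuals: $\mathbf{r}_j^{\mathrm F}=\mathbf{b}-\mathbf{A}\mathbf{x}_j^{\mathrm F}$, $\mathbf{r}_j^{\mathrm G}=\mathbf{b}-\mathbf{A}\mathbf{x}_j^{\mathrm G}$ (so $\mathbf{r}_0^{\mathrm F}=\mathbf{r}_0^{\mathrm G}=\mathbf{b}$). Convention: if $\mathbf{H}_j$ is singular, the FOM iterate is undefined and $\|\mathbf{r}_j^{\mathrm F}\|_2$ is defined to be $+\infty$. *)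

theory Defs
  imports "HOL-Analysis.Analysis" "HOL-Library.Extended_Real"
begin

text \<open>Indices are 0-based: q_0..q_k are the Arnoldi vectors (paper's q_1..q_{k+1}),
  H r c is the paper's h_{r+1,c+1}.\<close>

definition cinner :: "complex^'n \<Rightarrow> complex^'n \<Rightarrow> complex" where
  "cinner x y = (\<Sum>i\<in>UNIV. x $ i * cnj (y $ i))"

definition kvec :: "complex^'n^'n \<Rightarrow> complex^'n \<Rightarrow> nat \<Rightarrow> complex^'n" where
  "kvec A b i = ((\<lambda>x. A *v x) ^^ i) b"

definition krylov :: "complex^'n^'n \<Rightarrow> complex^'n \<Rightarrow> nat \<Rightarrow> (complex^'n) set" where
  "krylov A b m = {x. \<exists>c::nat \<Rightarrow> complex. x = (\<Sum>i<m. c i *s kvec A b i)}"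

definition krylov_full_dim :: "complex^'n^'n \<Rightarrow> complex^'n \<Rightarrow> nat \<Rightarrow> bool" where
  "krylov_full_dim A b m \<longleftrightarrow>
     (\<forall>c::nat \<Rightarrow> complex. (\<Sum>i<m. c i *s kvec A b i) = 0 \<longrightarrow> (\<forall>i<m. c i = 0))"

text \<open>Q, H is the output of k steps of Arnoldi on (A,b):
  orthonormal q_0..q_k, q_0 = b/||b||, H (k+1) x k upper Hessenberg with positive real
  subdiagonal, and A Q_k = Q_{k+1} H_{k+1,k}.\<close>
definition arnoldi :: "complex^'n^'n \<Rightarrow> complex^'n \<Rightarrow> nat \<Rightarrow> (nat \<Rightarrow> complex^'n)
    \<Rightarrow> (nat \<Rightarrow> nat \<Rightarrow> complex) \<Rightarrow> bool" where
  "arnoldi A b k Q H \<longleftrightarrow>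
     Q 0 = (complex_of_real (1 / norm b)) *s b \<and>
     (\<forall>i\<le>k. \<forall>j\<le>k. cinner (Q i) (Q j) = (if i = j then 1 else 0)) \<and>
     (\<forall>c<k. \<forall>r\<le>k. c + 1 < r \<longrightarrow> H r c = 0) \<and>
     (\<forall>c<k. H (c+1) c \<in> \<real> \<and> Re (H (c+1) c) > 0) \<and>
     (\<forall>c<k. A *v Q c = (\<Sum>r\<le>k. H r c *s Q r))"

definition Hsingular :: "(nat \<Rightarrow> nat \<Rightarrow> complex) \<Rightarrow> nat \<Rightarrow> bool" where
  "Hsingular H j \<longleftrightarrow> (\<exists>y::nat \<Rightarrow> complex. (\<exists>c<j. y c \<noteq> 0) \<and>
        (\<forall>r<j. (\<Sum>c<j. H r c * y c) = 0))"

definition fom_coeffs :: "complex^'n \<Rightarrow> (nat \<Rightarrow> nat \<Rightarrow> complex) \<Rightarrow> nat \<Rightarrow> nat \<Rightarrow> complex" where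
  "fom_coeffs b H j = (THE y. (\<forall>c. j \<le> c \<longrightarrow> y c = 0) \<and>
        (\<forall>r<j. (\<Sum>c<j. H r c * y c) = (if r = 0 then complex_of_real (norm b) else 0)))"

definition fom_iterate :: "complex^'n \<Rightarrow> (nat \<Rightarrow> complex^'n) \<Rightarrow> (nat \<Rightarrow> nat \<Rightarrow> complex)
    \<Rightarrow> nat \<Rightarrow> complex^'n" where
  "fom_iterate b Q H j = (\<Sum>c<j. fom_coeffs b H j c *s Q c)"

definition fom_resnorm :: "complex^'n^'n \<Rightarrow> complex^'n \<Rightarrow> (nat \<Rightarrow> complex^'n)
    \<Rightarrow> (nat \<Rightarrow> nat \<Rightarrow> complex) \<Rightarrow> nat \<Rightarrow> ereal" where
  "fom_resnorm A b Q H j =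
     (if j = 0 then ereal (norm b)
      else if Hsingular H j then \<infinity>
      else ereal (norm (b - A *v fom_iterate b Q H j)))"

definition gmres_resnorm :: "complex^'n^'n \<Rightarrow> complex^'n \<Rightarrow> nat \<Rightarrow> real" where
  "gmres_resnorm A b j = Inf ((\<lambda>x. norm (b - A *v x)) ` krylov A b j)"

end

theory Submission
  imports Defs "Jordan_Normal_Form.Determinant"
begin

text \<open>Let \<open>v\<close> be the left null vector of \<open>H\<^sub>k\<^sub>+\<^sub>1\<^sub>,\<^sub>k\<close> normalised by \<open>v\<^sub>0 = 1\<close>, and put
  \<open>g = Q\<^sub>k\<^sub>+\<^sub>1 conj(v)\<close>. The Arnoldi relation makes \<open>g\<close> orthogonal to \<open>A K\<^sub>k\<close>, while
  \<open>\<langle>b, g\<rangle> = \<parallel>b\<parallel>\<close>; hence every residual \<open>b - A x\<close>, \<open>x \<in> K\<^sub>k\<close>, has inner product \<open>\<parallel>b\<parallel>\<close> with \<open>g\<close>.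
  For GMRES this gives \<open>\<parallel>r\<^sub>k\<^sup>G\<parallel> \<ge> \<parallel>b\<parallel> / \<parallel>v\<parallel>\<close>. The FOM residual \<open>r\<^sub>j\<^sup>F\<close> is a multiple of \<open>q\<^sub>j\<close>, so
  the same identity gives \<open>\<parallel>r\<^sub>j\<^sup>F\<parallel> = \<parallel>b\<parallel> / |v\<^sub>j|\<close> whenever \<open>v\<^sub>j \<noteq> 0\<close> (and then \<open>H\<^sub>j\<close> is
  nonsingular). Taking \<open>j\<close> with \<open>|v\<^sub>j|\<close> maximal, \<open>\<parallel>v\<parallel> \<le> \<surd>(k+1) |v\<^sub>j|\<close> yields the bound.\<close>

section \<open>The complex inner product on \<open>complex^'n\<close>\<close>

lemma cinner_sum_left: "cinner (\<Sum>s\<in>S. f s) y = (\<Sum>s\<in>S. cinner (f s) y)"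
  unfolding cinner_def by (simp add: sum_distrib_right) (rule sum.swap)

lemma cinner_sum_right: "cinner x (\<Sum>s\<in>S. f s) = (\<Sum>s\<in>S. cinner x (f s))"
  unfolding cinner_def by (simp add: sum_distrib_left cnj_sum) (rule sum.swap)

lemma cinner_scale_left: "cinner (c *s x) y = c * cinner x y"
  unfolding cinner_def by (simp add: sum_distrib_left mult.assoc)

lemma cinner_scale_right: "cinner x (c *s y) = cnj c * cinner x y"
  unfolding cinner_def by (simp add: sum_distrib_left mult_ac)

lemma cinner_add_left: "cinner (x + y) z = cinner x z + cinner y z"
  unfolding cinner_def by (simp add: distrib_right sum.distrib)

lemma cinner_diff_left: "cinner (x - y) z = cinner x z - cinner y z"
  unfolding cinner_def by (simp add: left_diff_distrib sum_subtractf)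

lemma cinner_minus_left: "cinner (- x) y = - cinner x y"
  unfolding cinner_def by (simp add: sum_negf)

lemma cinner_zero_left [simp]: "cinner 0 y = 0"
  unfolding cinner_def by simp

lemma cinner_self: "cinner x x = complex_of_real ((norm x)\<^sup>2)"
proof -
  have "cinner x x = (\<Sum>i\<in>UNIV. complex_of_real ((cmod (x$i))\<^sup>2))"
    unfolding cinner_def by (intro sum.cong refl) (rule complex_norm_square[symmetric])
  also have "\<dots> = complex_of_real ((norm x)\<^sup>2)"
    unfolding norm_vec_def L2_set_def by (simp add: sum_nonneg)
  finally show ?thesis .
qed

lemma cinner_Cauchy_Schwarz: "cmod (cinner x y) \<le> norm x * norm y"
proof -
  have "cmod (cinner x y) \<le> (\<Sum>i\<in>UNIV. cmod (x$i) * cmod (y$i))"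
    unfolding cinner_def by (rule order_trans[OF norm_sum]) (simp add: norm_mult)
  also have "\<dots> \<le> L2_set (\<lambda>i. cmod (x$i)) UNIV * L2_set (\<lambda>i. cmod (y$i)) UNIV"
    using L2_set_mult_ineq[of "\<lambda>i. cmod (x$i)" "\<lambda>i. cmod (y$i)" UNIV] by simp
  finally show ?thesis by (simp add: norm_vec_def)
qed

lemma subspace_cinner_eq_0: "vec.subspace {x. cinner x y = 0}"
  by (rule vec.subspaceI) (simp_all add: cinner_add_left cinner_scale_left)

lemma norm_vector_smult: "norm (c *s x) = cmod c * norm (x :: complex^'n)"
proof -
  have "complex_of_real ((norm (c *s x))\<^sup>2) = complex_of_real ((cmod c * norm x)\<^sup>2)"
    unfolding cinner_self[symmetric] power_mult_distrib of_real_mult complex_norm_square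
    by (simp add: cinner_scale_left cinner_scale_right mult_ac)
  then show ?thesis
    by (simp only: of_real_eq_iff power2_eq_iff_nonneg norm_ge_zero zero_le_mult_iff) simp
qed

lemma cinner_orthonormal_sum:
  fixes k :: nat
  assumes "\<And>i j. i \<le> k \<Longrightarrow> j \<le> k \<Longrightarrow> cinner (Q i) (Q j) = (if i = j then 1 else 0)"
    and "r \<le> k"
  shows "cinner (Q r) (\<Sum>s\<le>k. w s *s Q s) = cnj (w r)"
proof -
  have "cinner (Q r) (\<Sum>s\<le>k. w s *s Q s) = (\<Sum>s\<le>k. if s = r then cnj (w s) else 0)"
    unfolding cinner_sum_right cinner_scale_right by (intro sum.cong) (auto simp: assms)
  also have "\<dots> = cnj (w r)"
    using \<open>r \<le> k\<close> by (subst sum.delta) auto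
  finally show ?thesis .
qed

lemma norm_orthonormal_sum_squared:
  fixes k :: nat
  assumes "\<And>i j. i \<le> k \<Longrightarrow> j \<le> k \<Longrightarrow> cinner (Q i) (Q j) = (if i = j then 1 else 0)"
  shows "(norm (\<Sum>s\<le>k. w s *s Q s))\<^sup>2 = (\<Sum>s\<le>k. (cmod (w s))\<^sup>2)"
proof -
  have "cinner (\<Sum>s\<le>k. w s *s Q s) (\<Sum>s\<le>k. w s *s Q s) = (\<Sum>s\<le>k. w s * cnj (w s))"
    by (simp add: cinner_sum_left cinner_scale_left cinner_orthonormal_sum[OF assms])
  also have "\<dots> = complex_of_real (\<Sum>s\<le>k. (cmod (w s))\<^sup>2)"
    by (simp add: complex_norm_square[symmetric])
  finally show ?thesis
    unfolding cinner_self of_real_eq_iff .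
qed

lemma sum_smult_sum_swap:
  fixes Q :: "nat \<Rightarrow> complex^'n"
  shows "(\<Sum>c\<in>S. z c *s (\<Sum>r\<in>T. H r c *s Q r)) = (\<Sum>r\<in>T. (\<Sum>c\<in>S. H r c * z c) *s Q r)"
proof -
  have "(\<Sum>c\<in>S. z c * (\<Sum>r\<in>T. H r c * Q r $ i)) = (\<Sum>r\<in>T. (\<Sum>c\<in>S. H r c * z c) * Q r $ i)" for i
    by (simp add: sum_distrib_left sum_distrib_right mult_ac) (rule sum.swap)
  then show ?thesis
    by (simp add: Finite_Cartesian_Product.vec_eq_iff)
qed

lemma sum_smult_in_span: "J \<le> (m::nat) \<Longrightarrow> (\<Sum>c<J. y c *s Q c) \<in> vec.span (Q ` {..<m})"
  by (intro vec.span_sum vec.span_scale vec.span_base) (auto intro!: imageI)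

section \<open>Square linear systems and upper Hessenberg matrices\<close>

lemma not_Hsingular_kernel:
  assumes "\<not> Hsingular M n" and "\<forall>r<n. (\<Sum>c<n. M r c * y c) = 0"
  shows "\<forall>c<n. y c = 0"
  using assms unfolding Hsingular_def by blast

lemma not_Hsingular_solvable:
  fixes M :: "nat \<Rightarrow> nat \<Rightarrow> complex"
  assumes "\<not> Hsingular M n"
  shows "\<exists>z. \<forall>r<n. (\<Sum>c<n. M r c * z c) = rhs r"
proof -
  define M' where "M' = mat n n (\<lambda>(i, j). M i j)"
  have M'_carrier: "M' \<in> carrier_mat n n"
    unfolding M'_def by simp
  have M'_mult: "(M' *\<^sub>v y) $ r = (\<Sum>c<n. M r c * y $ c)" if "y \<in> carrier_vec n" "r < n" for y r
    using that unfolding M'_def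
    by (auto simp: scalar_prod_def row_def lessThan_atLeast0 intro!: sum.cong)
  have "det M' \<noteq> 0"
  proof
    assume "det M' = 0"
    then obtain y where y: "y \<in> carrier_vec n" "y \<noteq> 0\<^sub>v n" "M' *\<^sub>v y = 0\<^sub>v n"
      using det_0_iff_vec_prod_zero[OF M'_carrier] by auto
    have "\<forall>r<n. (\<Sum>c<n. M r c * y $ c) = 0"
      using y M'_mult by (metis index_zero_vec(1))
    then have "\<forall>c<n. y $ c = 0"
      by (rule not_Hsingular_kernel[OF assms])
    then show False
      using y by (metis eq_vecI index_zero_vec carrier_vecD)
  qed
  then have "M' \<in> Units (ring_mat TYPE(complex) n ())"
    by (rule det_non_zero_imp_unit[OF M'_carrier])
  then obtain B where B: "B \<in> carrier_mat n n" "M' * B = 1\<^sub>m n"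
    unfolding Units_def ring_mat_def by auto
  define z where "z = B *\<^sub>v vec n rhs"
  have "M' *\<^sub>v z = vec n rhs"
    unfolding z_def using B M'_carrier by (simp add: assoc_mult_mat_vec[symmetric, of _ n n _ n])
  then have "\<forall>r<n. (\<Sum>c<n. M r c * z $ c) = rhs r"
    using M'_mult[of z] B unfolding z_def by auto
  then show ?thesis by blast
qed

lemma fom_coeffs_solve:
  assumes "\<not> Hsingular H j"
  shows "\<forall>c. j \<le> c \<longrightarrow> fom_coeffs b H j c = 0"
    and "\<forall>r<j. (\<Sum>c<j. H r c * fom_coeffs b H j c)
                 = (if r = 0 then complex_of_real (norm b) else 0)"
proof -
  let ?rhs = "\<lambda>r. if r = 0 then complex_of_real (norm b) else 0"
  let ?P = "\<lambda>y. (\<forall>c. j \<le> c \<longrightarrow> y c = 0) \<and> (\<forall>r<j. (\<Sum>c<j. H r c * y c) = ?rhs r)"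
  obtain z where z: "\<forall>r<j. (\<Sum>c<j. H r c * z c) = ?rhs r"
    using not_Hsingular_solvable[OF assms, where rhs = ?rhs] by blast
  have solution: "?P (\<lambda>c. if c < j then z c else 0)"
    using z by simp
  have unique: "y = y'" if "?P y" "?P y'" for y y'
  proof -
    have "\<forall>r<j. (\<Sum>c<j. H r c * (y c - y' c)) = 0"
      using that by (simp add: right_diff_distrib sum_subtractf)
    then have "\<forall>c<j. y c - y' c = 0"
      by (rule not_Hsingular_kernel[OF assms])
    then show "y = y'"
      using that by (metis not_le eq_iff_diff_eq_0 ext)
  qed
  have "?P (fom_coeffs b H j)"
    unfolding fom_coeffs_def using solution unique[OF _ solution] by (rule theI)
  then show "\<forall>c. j \<le> c \<longrightarrow> fom_coeffs b H j c = 0"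
    and "\<forall>r<j. (\<Sum>c<j. H r c * fom_coeffs b H j c) = ?rhs r"
    by blast+
qed

lemma unreduced_hessenberg_left_null_vector:
  fixes h :: "nat \<Rightarrow> nat \<Rightarrow> 'a::field"
  assumes "\<And>c. c < k \<Longrightarrow> h (Suc c) c \<noteq> 0"
  shows "\<exists>v. v 0 = 1 \<and> (\<forall>c<k. (\<Sum>r\<le>Suc c. v r * h r c) = 0)"
proof -
  have "n \<le> k \<Longrightarrow> \<exists>v. v 0 = 1 \<and> (\<forall>c<n. (\<Sum>r\<le>Suc c. v r * h r c) = 0)" for n
  proof (induction n)
    case 0
    show ?case
      by (intro exI[of _ "\<lambda>_. 1"]) simp
  next
    case (Suc n)
    then obtain v where v: "v 0 = 1" "\<forall>c<n. (\<Sum>r\<le>Suc c. v r * h r c) = 0"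
      by auto
    \<comment> \<open>only the new column involves \<open>v (Suc n)\<close>, and it is solved for by the nonzero pivot\<close>
    define v' where "v' = v(Suc n := - (\<Sum>r\<le>n. v r * h r n) / h (Suc n) n)"
    have same: "(\<Sum>r\<le>c. v' r * h r c') = (\<Sum>r\<le>c. v r * h r c')" if "c \<le> n" for c c'
      using that by (intro sum.cong) (auto simp: v'_def)
    have "h (Suc n) n \<noteq> 0"
      using assms Suc.prems by simp
    then have "(\<Sum>r\<le>Suc c. v' r * h r c) = 0" if "c < Suc n" for c
    proof (cases "c < n")
      case True
      then show ?thesis
        using v(2) same[of "Suc c" c] by simp
    next
      case False
      then have "c = n"
        using that by simp
      then show ?thesis
        using same[of n n] \<open>h (Suc n) n \<noteq> 0\<close> by (simp add: v'_def)
    qed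
    moreover have "v' 0 = 1"
      using v(1) by (simp add: v'_def)
    ultimately show ?case
      by blast
  qed
  then show ?thesis by blast
qed

lemma unreduced_hessenberg_kernel:
  fixes H :: "nat \<Rightarrow> nat \<Rightarrow> 'a::idom"
  assumes hess: "\<And>r c. r < J \<Longrightarrow> c + 1 < r \<Longrightarrow> H r c = 0"
    and subdiag: "\<And>c. Suc c < J \<Longrightarrow> H (Suc c) c \<noteq> 0"
    and kernel: "\<And>r. r < J \<Longrightarrow> (\<Sum>c<J. H r c * y c) = 0"
    and last: "y (J - 1) = 0"
  shows "\<forall>c<J. y c = 0"
proof (rule ccontr)
  assume "\<not> (\<forall>c<J. y c = 0)"
  then have support: "{c. c < J \<and> y c \<noteq> 0} \<noteq> {}" by blast
  define m where "m = Max {c. c < J \<and> y c \<noteq> 0}"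
  have m: "m < J" "y m \<noteq> 0"
    using Max_in[OF _ support] unfolding m_def by auto
  have above_m: "y c = 0" if "m < c" "c < J" for c
  proof (rule ccontr)
    assume "y c \<noteq> 0"
    then have "c \<le> m"
      using that unfolding m_def by (intro Max_ge) auto
    with that show False by simp
  qed
  have "Suc m < J"
    using m last by (metis Suc_lessI diff_Suc_1)
  \<comment> \<open>row \<open>m + 1\<close> of \<open>H\<^sub>J y\<close> reduces to the single term \<open>h\<^sub>m\<^sub>+\<^sub>1\<^sub>,\<^sub>m y\<^sub>m\<close>\<close>
  have "H (Suc m) c * y c = (if c = m then H (Suc m) m * y m else 0)" if "c < J" for c
  proof (cases "c < m")
    case True
    then show ?thesis
      using hess[of "Suc m" c] \<open>Suc m < J\<close> by simp
  next
    case False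
    then show ?thesis
      using that above_m[of c] by (cases "c = m") auto
  qed
  then have "(\<Sum>c<J. H (Suc m) c * y c) = (\<Sum>c<J. if c = m then H (Suc m) m * y m else 0)"
    by (intro sum.cong) auto
  also have "\<dots> = H (Suc m) m * y m"
    using m by simp
  finally show False
    using kernel[OF \<open>Suc m < J\<close>] subdiag[OF \<open>Suc m < J\<close>] m by simp
qed

section \<open>Consequences of the Arnoldi relation\<close>

locale arnoldi_process =
  fixes A :: "complex^'n^'n" and b :: "complex^'n" and k :: nat
    and Q :: "nat \<Rightarrow> complex^'n" and H :: "nat \<Rightarrow> nat \<Rightarrow> complex"
  assumes arnoldi: "arnoldi A b k Q H" and b_nonzero: "b \<noteq> 0"
begin

lemma b_eq: "b = complex_of_real (norm b) *s Q 0"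
proof -
  have "Q 0 = complex_of_real (1 / norm b) *s b"
    using arnoldi unfolding arnoldi_def by blast
  then show ?thesis
    using b_nonzero by (simp add: vector_smult_assoc flip: of_real_mult)
qed

lemma Q_orthonormal: "i \<le> k \<Longrightarrow> j \<le> k \<Longrightarrow> cinner (Q i) (Q j) = (if i = j then 1 else 0)"
  using arnoldi unfolding arnoldi_def by blast

lemma norm_Q:
  assumes "r \<le> k"
  shows "norm (Q r) = 1"
proof -
  have "complex_of_real ((norm (Q r))\<^sup>2) = 1"
    using Q_orthonormal[OF assms assms] unfolding cinner_self by simp
  then have "(norm (Q r))\<^sup>2 = 1"
    by (simp only: of_real_eq_1_iff)
  then show ?thesis
    by (smt (verit) norm_ge_zero power2_eq_1_iff)
qed

lemma H_hessenberg: "c < k \<Longrightarrow> r \<le> k \<Longrightarrow> c + 1 < r \<Longrightarrow> H r c = 0"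
  using arnoldi unfolding arnoldi_def by blast

lemma H_subdiagonal_nonzero:
  assumes "c < k"
  shows "H (Suc c) c \<noteq> 0"
proof -
  have "Re (H (Suc c) c) > 0"
    using arnoldi assms unfolding arnoldi_def by auto
  then show ?thesis
    by auto
qed

lemma A_mult_Q: "c < k \<Longrightarrow> A *v Q c = (\<Sum>r\<le>k. H r c *s Q r)"
  using arnoldi unfolding arnoldi_def by blast

lemma H_left_null_vector: "\<exists>v. v 0 = 1 \<and> (\<forall>c<k. (\<Sum>r\<le>k. v r * H r c) = 0)"
proof -
  obtain v where "v 0 = 1" and v: "\<forall>c<k. (\<Sum>r\<le>Suc c. v r * H r c) = 0"
    using unreduced_hessenberg_left_null_vector[of k H, OF H_subdiagonal_nonzero] by blast
  have "(\<Sum>r\<le>k. v r * H r c) = 0" if "c < k" for c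
  proof -
    have "(\<Sum>r\<le>k. v r * H r c) = (\<Sum>r\<le>Suc c. v r * H r c)"
      using that H_hessenberg[of c] by (intro sum.mono_neutral_right) auto
    then show ?thesis
      using v that by simp
  qed
  then show ?thesis
    using \<open>v 0 = 1\<close> by blast
qed

lemma A_mult_Q_in_span:
  assumes "c < k"
  shows "A *v Q c \<in> vec.span (Q ` {..Suc c})"
proof -
  have "H r c *s Q r \<in> vec.span (Q ` {..Suc c})" if "r \<le> k" for r
  proof (cases "r \<le> Suc c")
    case True
    then show ?thesis
      by (intro vec.span_scale vec.span_base) auto
  next
    case False
    then show ?thesis
      using H_hessenberg[OF assms that] by (simp add: vec.span_zero)
  qed
  then show ?thesis
    unfolding A_mult_Q[OF assms] by (intro vec.span_sum) auto
qed

lemma kvec_in_span: "i \<le> k \<Longrightarrow> kvec A b i \<in> vec.span (Q ` {..i})"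
proof (induction i)
  case 0
  show ?case
    by (subst b_eq) (simp add: kvec_def vec.span_base vec.span_scale)
next
  case (Suc i)
  have "A *v Q c \<in> vec.span (Q ` {..Suc i})" if "c \<le> i" for c
  proof -
    have "vec.span (Q ` {..Suc c}) \<subseteq> vec.span (Q ` {..Suc i})"
      using that by (intro vec.span_mono image_mono) auto
    then show ?thesis
      using A_mult_Q_in_span[of c] that Suc.prems by auto
  qed
  then have "(*v) A ` Q ` {..i} \<subseteq> vec.span (Q ` {..Suc i})"
    by auto
  then have "vec.span ((*v) A ` Q ` {..i}) \<subseteq> vec.span (Q ` {..Suc i})"
    by (rule vec.span_minimal[OF _ vec.subspace_span])
  moreover have "kvec A b (Suc i) \<in> (*v) A ` vec.span (Q ` {..i})"
    using Suc by (simp add: kvec_def)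
  ultimately show ?case
    by (auto simp: vec.span_image)
qed

lemma krylov_subset_span: "krylov A b k \<subseteq> vec.span (Q ` {..<k})"
proof
  fix x assume "x \<in> krylov A b k"
  then obtain c where x: "x = (\<Sum>i<k. c i *s kvec A b i)"
    unfolding krylov_def by blast
  have "kvec A b i \<in> vec.span (Q ` {..<k})" if "i < k" for i
  proof -
    have "vec.span (Q ` {..i}) \<subseteq> vec.span (Q ` {..<k})"
      using that by (intro vec.span_mono image_mono) auto
    then show ?thesis
      using kvec_in_span[of i] that by auto
  qed
  then show "x \<in> vec.span (Q ` {..<k})"
    unfolding x by (intro vec.span_sum vec.span_scale) auto
qed

text \<open>The matrix form \<open>A Q\<^sub>J = Q\<^sub>J H\<^sub>J + h\<^sub>J\<^sub>,\<^sub>J\<^sub>-\<^sub>1 q\<^sub>J e\<^sub>J\<^sup>T\<close> of the Arnoldi relation.\<close>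

lemma A_mult_Q_block:
  assumes "1 \<le> J" "J \<le> k"
  shows "A *v (\<Sum>c<J. y c *s Q c)
           = (\<Sum>r<J. (\<Sum>c<J. H r c * y c) *s Q r) + (H J (J - 1) * y (J - 1)) *s Q J"
proof -
  let ?Hy = "\<lambda>r. \<Sum>c<J. H r c * y c"
  have Hy_tail: "?Hy r = (if r = J then H J (J - 1) * y (J - 1) else 0)" if "J \<le> r" "r \<le> k" for r
  proof -
    have "?Hy r = (\<Sum>c<J. if r = J \<and> c = J - 1 then H J (J - 1) * y (J - 1) else 0)"
      using assms that by (intro sum.cong) (auto simp: H_hessenberg)
    then show ?thesis
      using assms by simp
  qed
  have "A *v (\<Sum>c<J. y c *s Q c) = (\<Sum>c<J. y c *s (\<Sum>r\<le>k. H r c *s Q r))"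
    using assms by (simp add: vec.sum vec.scale A_mult_Q)
  also have "\<dots> = (\<Sum>r\<le>k. ?Hy r *s Q r)"
    by (rule sum_smult_sum_swap)
  also have "\<dots> = (\<Sum>r<J. ?Hy r *s Q r) + (\<Sum>r\<in>{J..k}. ?Hy r *s Q r)"
    using assms by (subst sum.union_disjoint[symmetric]) (auto intro: sum.cong)
  also have "(\<Sum>r\<in>{J..k}. ?Hy r *s Q r)
               = (\<Sum>r\<in>{J..k}. if r = J then (H J (J - 1) * y (J - 1)) *s Q J else 0)"
    by (intro sum.cong) (auto simp: Hy_tail)
  also have "\<dots> = (H J (J - 1) * y (J - 1)) *s Q J"
    using assms by (subst sum.delta) auto
  finally show ?thesis .
qed

end

locale arnoldi_left_null = arnoldi_process +
  fixes v :: "nat \<Rightarrow> complex"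
  assumes v_0: "v 0 = 1"
    and v_left_null: "\<And>c. c < k \<Longrightarrow> (\<Sum>r\<le>k. v r * H r c) = 0"
begin

definition dual_vector where
  "dual_vector = (\<Sum>s\<le>k. cnj (v s) *s Q s)"

lemma cinner_Q_dual_vector: "r \<le> k \<Longrightarrow> cinner (Q r) dual_vector = v r"
  unfolding dual_vector_def using cinner_orthonormal_sum[OF Q_orthonormal] by simp

lemma cinner_A_mult_Q_dual_vector:
  assumes "c < k"
  shows "cinner (A *v Q c) dual_vector = 0"
proof -
  have "cinner (A *v Q c) dual_vector = (\<Sum>r\<le>k. H r c * cinner (Q r) dual_vector)"
    by (simp add: A_mult_Q[OF assms] cinner_sum_left cinner_scale_left)
  also have "\<dots> = (\<Sum>r\<le>k. v r * H r c)"
    by (intro sum.cong) (simp_all add: cinner_Q_dual_vector)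
  finally show ?thesis
    using v_left_null[OF assms] by simp
qed

lemma cinner_A_mult_dual_vector:
  assumes "x \<in> vec.span (Q ` {..<k})"
  shows "cinner (A *v x) dual_vector = 0"
proof -
  have "(*v) A ` Q ` {..<k} \<subseteq> {y. cinner y dual_vector = 0}"
    using cinner_A_mult_Q_dual_vector by auto
  then have "vec.span ((*v) A ` Q ` {..<k}) \<subseteq> {y. cinner y dual_vector = 0}"
    by (rule vec.span_minimal[OF _ subspace_cinner_eq_0])
  then show ?thesis
    using assms by (auto simp: vec.span_image)
qed

lemma cinner_residual_dual_vector:
  assumes "x \<in> vec.span (Q ` {..<k})"
  shows "cinner (b - A *v x) dual_vector = complex_of_real (norm b)"
  using cinner_A_mult_dual_vector[OF assms] cinner_Q_dual_vector[of 0] v_0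
  by (subst b_eq) (simp add: cinner_diff_left cinner_scale_left)

lemma norm_dual_vector_le:
  assumes "\<And>r. r \<le> k \<Longrightarrow> cmod (v r) \<le> cmod (v J)"
  shows "norm dual_vector \<le> sqrt (real (k + 1)) * cmod (v J)"
proof -
  have "(norm dual_vector)\<^sup>2 = (\<Sum>s\<le>k. (cmod (v s))\<^sup>2)"
    using norm_orthonormal_sum_squared[OF Q_orthonormal, where w = "\<lambda>s. cnj (v s)"]
    by (simp add: dual_vector_def)
  also have "\<dots> \<le> (\<Sum>s\<le>k. (cmod (v J))\<^sup>2)"
    by (intro sum_mono power_mono assms) auto
  also have "\<dots> = (sqrt (real (k + 1)) * cmod (v J))\<^sup>2"
    by (simp add: power_mult_distrib)
  finally show ?thesis
    by (rule power2_le_imp_le) simp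
qed

lemma gmres_resnorm_lower_bound:
  assumes "\<And>r. r \<le> k \<Longrightarrow> cmod (v r) \<le> cmod (v J)"
  shows "norm b / cmod (v J) \<le> sqrt (real (k + 1)) * gmres_resnorm A b k"
proof -
  let ?s = "sqrt (real (k + 1))"
  have "1 \<le> cmod (v J)"
    using assms[of 0] v_0 by simp
  then have pos: "0 < ?s * cmod (v J)"
    by (intro mult_pos_pos) auto
  have "norm b / (?s * cmod (v J)) \<le> norm (b - A *v x)" if "x \<in> krylov A b k" for x
  proof -
    have "norm b = cmod (cinner (b - A *v x) dual_vector)"
      using cinner_residual_dual_vector krylov_subset_span that by auto
    also have "\<dots> \<le> norm (b - A *v x) * norm dual_vector"
      by (rule cinner_Cauchy_Schwarz)
    also have "\<dots> \<le> norm (b - A *v x) * (?s * cmod (v J))"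
      using norm_dual_vector_le[OF assms] by (intro mult_left_mono) auto
    finally show ?thesis
      using pos by (simp add: divide_le_eq mult.commute)
  qed
  moreover have "0 \<in> krylov A b k"
    unfolding krylov_def by (auto intro: exI[of _ "\<lambda>_. 0"])
  ultimately have "norm b / (?s * cmod (v J)) \<le> gmres_resnorm A b k"
    unfolding gmres_resnorm_def by (intro cInf_greatest) auto
  then have "?s * (norm b / (?s * cmod (v J))) \<le> ?s * gmres_resnorm A b k"
    by (intro mult_left_mono) auto
  moreover have "?s * (norm b / (?s * cmod (v J))) = norm b / cmod (v J)"
    using pos by (simp add: field_simps)
  ultimately show ?thesis
    by simp
qed

lemma leading_block_nonsingular:
  assumes J: "1 \<le> J" "J \<le> k" and "v J \<noteq> 0"
  shows "\<not> Hsingular H J"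
proof
  assume "Hsingular H J"
  then obtain y where y: "\<exists>c<J. y c \<noteq> 0" and kernel: "\<forall>r<J. (\<Sum>c<J. H r c * y c) = 0"
    unfolding Hsingular_def by blast
  let ?x = "\<Sum>c<J. y c *s Q c"
  have "A *v ?x = (H J (J - 1) * y (J - 1)) *s Q J"
    using A_mult_Q_block[OF J] kernel by simp
  then have "H J (J - 1) * y (J - 1) * v J = cinner (A *v ?x) dual_vector"
    using J by (simp add: cinner_scale_left cinner_Q_dual_vector)
  also have "\<dots> = 0"
    using sum_smult_in_span J by (intro cinner_A_mult_dual_vector) blast
  finally have "H J (J - 1) * y (J - 1) * v J = 0" .
  then have "y (J - 1) = 0"
    using H_subdiagonal_nonzero[of "J - 1"] J \<open>v J \<noteq> 0\<close> by simp
  then have "\<forall>c<J. y c = 0"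
    using J kernel H_subdiagonal_nonzero
    by (intro unreduced_hessenberg_kernel[of J H]) (auto simp: H_hessenberg)
  then show False
    using y by blast
qed

lemma fom_resnorm_eq:
  assumes "J \<le> k" and "v J \<noteq> 0"
  shows "fom_resnorm A b Q H J = ereal (norm b / cmod (v J))"
proof (cases "J = 0")
  case True
  then show ?thesis
    using v_0 by (simp add: fom_resnorm_def)
next
  case False
  then have J: "1 \<le> J" "J \<le> k"
    using assms by auto
  have nonsing: "\<not> Hsingular H J"
    using leading_block_nonsingular[OF J \<open>v J \<noteq> 0\<close>] .
  let ?z = "fom_coeffs b H J"
  let ?x = "fom_iterate b Q H J"
  define t where "t = H J (J - 1) * ?z (J - 1)"
  have "(\<Sum>r<J. (\<Sum>c<J. H r c * ?z c) *s Q r)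
          = (\<Sum>r<J. (if r = 0 then complex_of_real (norm b) *s Q 0 else 0))"
    using fom_coeffs_solve(2)[OF nonsing, where b = b] by (intro sum.cong) auto
  then have "A *v ?x = complex_of_real (norm b) *s Q 0 + t *s Q J"
    using A_mult_Q_block[OF J] J unfolding fom_iterate_def t_def by simp
  \<comment> \<open>the Galerkin condition leaves only the component along \<open>q\<^sub>J\<close>\<close>
  then have residual: "b - A *v ?x = - (t *s Q J)"
    by (subst b_eq) simp
  have "- (t * v J) = cinner (b - A *v ?x) dual_vector"
    unfolding residual using J by (simp add: cinner_minus_left cinner_scale_left cinner_Q_dual_vector)
  also have "\<dots> = complex_of_real (norm b)"
    unfolding fom_iterate_def using sum_smult_in_span J
    by (intro cinner_residual_dual_vector) blast
  finally have "cmod (- (t * v J)) = norm b"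
    by simp
  then have "cmod t * cmod (v J) = norm b"
    by (simp add: norm_mult)
  moreover have "norm (b - A *v ?x) = cmod t"
    using residual norm_Q J by (simp add: norm_vector_smult)
  ultimately show ?thesis
    using \<open>v J \<noteq> 0\<close> nonsing False by (simp add: fom_resnorm_def field_simps)
qed

end

theorem theorem2p1:
  fixes A :: "complex^'n^'n" and b :: "complex^'n" and k :: nat
    and Q :: "nat \<Rightarrow> complex^'n" and H :: "nat \<Rightarrow> nat \<Rightarrow> complex"
  assumes "b \<noteq> 0"
    and "k \<ge> 1"
    and "krylov_full_dim A b (k + 1)"
    and "arnoldi A b k Q H"
  shows "(MIN j\<in>{0..k}. fom_resnorm A b Q H j)
           \<le> ereal (sqrt (real (k + 1)) * gmres_resnorm A b k)"
proof -
  interpret arnoldi_process A b k Q H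
    using assms(1,4) by unfold_locales
  obtain v where "v 0 = 1" "\<forall>c<k. (\<Sum>r\<le>k. v r * H r c) = 0"
    using H_left_null_vector by blast
  then interpret arnoldi_left_null A b k Q H v
    by unfold_locales auto
  have "(MAX r\<in>{..k}. cmod (v r)) \<in> (\<lambda>r. cmod (v r)) ` {..k}"
    by (rule Max_in) auto
  then obtain J where "J \<le> k" and J_max: "cmod (v J) = (MAX r\<in>{..k}. cmod (v r))"
    by (metis atMost_iff imageE)
  have v_le: "cmod (v r) \<le> cmod (v J)" if "r \<le> k" for r
    unfolding J_max using that by (intro Max_ge) auto
  have "v J \<noteq> 0"
    using v_le[of 0] v_0 by auto
  have "(MIN j\<in>{0..k}. fom_resnorm A b Q H j) \<le> fom_resnorm A b Q H J"
    using \<open>J \<le> k\<close> by (intro Min_le) auto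
  also have "\<dots> = ereal (norm b / cmod (v J))"
    using fom_resnorm_eq[OF \<open>J \<le> k\<close> \<open>v J \<noteq> 0\<close>] .
  also have "\<dots> \<le> ereal (sqrt (real (k + 1)) * gmres_resnorm A b k)"
    using gmres_resnorm_lower_bound[OF v_le] by simp
  finally show ?thesis .
qed

end
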